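(* Let $T$ be a c.n.u. contraction on $H$ and let $(H_+,H_-,\Gamma_+,\Gamma_-)$ be a boundary quadruple for $A_T^{\perp_s}$ with contractive Weyl function $B$, such that the graph of $T$ equals $\{a\in A_T^{\perp_s}:\Gamma_-a=0\}$. Let $\mathfrak{T}$ be the operator on $\{f_{\hat x}:x\in H\}$ defined by $\mathfrak{T}f_{\hat x}=f_{\widehat{Tx}}$. Then for every $f=f_{\hat x}$, $x\in H$, $$(\mathfrak{T}f)(\lambda)=\lambda f(\lambda)-B(\lambda)f(0_-)\quad\text{for all }\lambda\in\mathbb{D}_+,$$ $$(\mathfrak{T}f)(\lambda)=\frac{f(\lambda)-f(0_-)}{\lambda}\quad\text{for all }\lambda\in\mathbb{D}_-\setminus\{0_-\}.$$
   Context: $H$ is an infinite-dimensional separable complex Hilbert space with inner product $(\cdot,\cdot)_H$; $T\in\mathbb{B}(H)$, $\|T\|\le1$, is completely non-unitary. $\mathbb{K}=\ker(I-T^*T)$. $\mathbb{H}=H\oplus_\perp H$ with $[(x_1,x_2),(y_1,y_2)]=i(x_1,y_1)_H-i(x_2,y_2)_H$; $S^{\perp_s}=\{a:[a,b]=0\ \forall b\in S\}$; $A_T=\{(x,Tx):x\in\mathbb{K}\}$. $\mathbb{D}_\pm$ are two copies of the open unit disc with centers $0_\pm$; for $\lambda\in\mathbb{D}_\pm$, $\bar\lambda$ is regarded as a point of $\mathbb{D}_\mp$. $N_\lambda=\{(x,\lambda x)\}\cap A_T^{\perp_s}$ ($\lambda\in\mathbb{D}_+$), $N_\lambda=\{(\lambda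 x,x)\}\cap A_T^{\perp_s}$ ($\lambda\in\mathbb{D}_-$). Boundary quadruple: Hilbert spaces $H_\pm$, linear $\Gamma_\pm:A_T^{\perp_s}\to H_\pm$ with $(\Gamma_+,\Gamma_-)$ bounded, onto $H_+\oplus_\perp H_-$, kernel $A_T$, and $[a,b]=i(\Gamma_+a,\Gamma_+b)-i(\Gamma_-a,\Gamma_-b)$. Contractive Weyl function $B$: for $\lambda\in\mathbb{D}_+$, $\Gamma_+|_{N_\lambda}$ bijective onto $H_+$, $\Gamma_-a=B(\lambda)\Gamma_+a$ on $N_\lambda$; for $\lambda\in\mathbb{D}_-$, $\Gamma_-|_{N_\lambda}$ bijective onto $H_-$, $\Gamma_+a=B(\bar\lambda)^*\Gamma_-a$ on $N_\lambda$. $\gamma_+(\lambda)z\in N_\lambda$ with $\Gamma_+\gamma_+(\lambda)z=z$ ($\lambda\in\mathbb{D}_+$), $\gamma_-(\lambda)z\in N_\lambda$ with $\Gamma_-\gamma_-(\lambda)z=z$ ($\lambda\in\mathbb{D}_-$); $\varphi_+=pr_1\circ\gamma_+$, $\varphi_-=pr_2\circ\gamma_-$. $E_\lambda=pr_1(N_\lambda)$ or $pr_2(N_\lambda)$ for $\lambda\in\mathbb{D}_+$ or $\mathbb{D}_-$; $F^\dagger_\lambda=E_{\bar\lambda}$, $F_\lambda$ its conjugate-linear dual, pairing $((\cdot,\cdot))$. For $x\in H$, $\hat x(\lambda)\in F_\lambda$ is $\omega\mapsto(x,\omega)_H$ (and $x\mapsto\hat x$ is injective). For $\lambda\in\mathbb{D}_+$,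 $(\varphi_-^\dagger(\lambda)\omega,z)_{H_-}=((\omega,\varphi_-(\bar\lambda)z))$; for $\lambda\in\mathbb{D}_-$, $(\varphi_+^\dagger(\lambda)\omega,z)_{H_+}=((\omega,\varphi_+(\bar\lambda)z))$; $f_s(\lambda)=\varphi_-^\dagger(\lambda)s(\lambda)$ on $\mathbb{D}_+$ and $\varphi_+^\dagger(\lambda)s(\lambda)$ on $\mathbb{D}_-$. *)

theory Defs
  imports "HOL-Analysis.Analysis"
begin

class complex_vector = real_vector +
  fixes scaleC :: "complex \<Rightarrow> 'a \<Rightarrow> 'a"
  assumes scaleC_add_right: "scaleC a (x + y) = scaleC a x + scaleC a y"
    and scaleC_add_left: "scaleC (a + b) x = scaleC a x + scaleC b x"
    and scaleC_scaleC: "scaleC a (scaleC b x) = scaleC (a * b) x"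
    and scaleC_one: "scaleC 1 x = x"
    and scaleR_scaleC: "scaleR r x = scaleC (complex_of_real r) x"

text \<open>Inner product: linear in the first, conjugate-linear in the second argument.\<close>
class complex_inner = complex_vector + real_normed_vector +
  fixes cinner :: "'a \<Rightarrow> 'a \<Rightarrow> complex"
  assumes cinner_commute: "cinner x y = cnj (cinner y x)"
    and cinner_add_left: "cinner (x + y) z = cinner x z + cinner y z"
    and cinner_scaleC_left: "cinner (scaleC r x) y = r * cinner x y"
    and cinner_self_real: "Im (cinner x x) = 0"
    and cinner_self_nonneg: "0 \<le> Re (cinner x x)"
    and cinner_self_eq_zero: "cinner x x = 0 \<longleftrightarrow> x = 0"
    and norm_eq_sqrt_cinner: "norm x = sqrt (Re (cinner x x))"

class chilbert = complex_inner + complete_space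


instantiation complex :: complex_vector
begin
definition scaleC_complex :: "complex \<Rightarrow> complex \<Rightarrow> complex" where "scaleC_complex a x = a * x"
instance by standard (simp_all add: scaleC_complex_def algebra_simps scaleR_conv_of_real)
end

instantiation complex :: complex_inner
begin
definition cinner_complex :: "complex \<Rightarrow> complex \<Rightarrow> complex" where "cinner_complex x y = x * cnj y"
instance by standard (simp_all add: cinner_complex_def scaleC_complex_def algebra_simps cmod_def power2_eq_square)
end

instance complex :: chilbert ..

definition clinear :: "('a::complex_vector \<Rightarrow> 'b::complex_vector) \<Rightarrow> bool" where
  "clinear f \<longleftrightarrow> (\<forall>x y. f (x + y) = f x + f y) \<and> (\<forall>c x. f (scaleC c x) = scaleC c (f x))"

definition cbounded_linear :: "('a::complex_inner \<Rightarrow> 'b::complex_inner) \<Rightarrow> bool" where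
  "cbounded_linear f \<longleftrightarrow> clinear f \<and> (\<exists>K. \<forall>x. norm (f x) \<le> K * norm x)"

text \<open>Hilbert-space adjoint (for bounded operators it exists by the Riesz theorem).\<close>
definition cadjoint :: "('a::chilbert \<Rightarrow> 'b::chilbert) \<Rightarrow> 'b \<Rightarrow> 'a" where
  "cadjoint A y = (THE z. \<forall>x. cinner (A x) y = cinner x z)"

definition csubspace :: "'a::complex_vector set \<Rightarrow> bool" where
  "csubspace M \<longleftrightarrow> 0 \<in> M \<and> (\<forall>x\<in>M. \<forall>y\<in>M. x + y \<in> M) \<and> (\<forall>c. \<forall>x\<in>M. scaleC c x \<in> M)"

definition cspan :: "'a::complex_vector set \<Rightarrow> 'a set" where
  "cspan S = {sum (\<lambda>v. scaleC (c v) v) F | F c. finite F \<and> F \<subseteq> S}"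

definition infinite_dimensional :: "'a::complex_vector itself \<Rightarrow> bool" where
  "infinite_dimensional TYPE('a) \<longleftrightarrow> (\<forall>F::'a set. finite F \<longrightarrow> cspan F \<noteq> UNIV)"

definition separable_type :: "'a::metric_space itself \<Rightarrow> bool" where
  "separable_type TYPE('a) \<longleftrightarrow> (\<exists>D::'a set. countable D \<and> closure D = UNIV)"

definition completely_non_unitary :: "('a::chilbert \<Rightarrow> 'a) \<Rightarrow> bool" where
  "completely_non_unitary T \<longleftrightarrow>
     (\<forall>M. csubspace M \<and> closed M \<and> T ` M \<subseteq> M \<and> cadjoint T ` M \<subseteq> M \<and>
          (\<forall>x\<in>M. cadjoint T (T x) = x \<and> T (cadjoint T x) = x) \<longrightarrow> M = {0})"

definition kform :: "'a::chilbert \<times> 'a \<Rightarrow> 'a \<times> 'a \<Rightarrow> complex" where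
  "kform a b = \<i> * cinner (fst a) (fst b) - \<i> * cinner (snd a) (snd b)"

definition s_orth :: "('a::chilbert \<times> 'a) set \<Rightarrow> ('a \<times> 'a) set" where
  "s_orth S = {a. \<forall>b\<in>S. kform a b = 0}"

definition defect_ker :: "('a::chilbert \<Rightarrow> 'a) \<Rightarrow> 'a set" where
  "defect_ker T = {x. x - cadjoint T (T x) = 0}"

definition A_T :: "('a::chilbert \<Rightarrow> 'a) \<Rightarrow> ('a \<times> 'a) set" where
  "A_T T = {(x, T x) | x. x \<in> defect_ker T}"

text \<open>Points of the disc D_+ resp. D_- are represented by complex numbers of modulus < 1;
  the two copies are kept apart by using separate functions for the two sheets.\<close>
definition N_plus :: "('a::chilbert \<Rightarrow> 'a) \<Rightarrow> complex \<Rightarrow> ('a \<times> 'a) set" where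
  "N_plus T l = {(x, scaleC l x) | x. True} \<inter> s_orth (A_T T)"

definition N_minus :: "('a::chilbert \<Rightarrow> 'a) \<Rightarrow> complex \<Rightarrow> ('a \<times> 'a) set" where
  "N_minus T l = {(scaleC l x, x) | x. True} \<inter> s_orth (A_T T)"

definition boundary_quadruple ::
  "('a::chilbert \<Rightarrow> 'a) \<Rightarrow> ('a \<times> 'a \<Rightarrow> 'p::chilbert) \<Rightarrow> ('a \<times> 'a \<Rightarrow> 'm::chilbert) \<Rightarrow> bool" where
  "boundary_quadruple T Gp Gm \<longleftrightarrow>
     (let L = s_orth (A_T T) in
       (\<forall>a\<in>L. \<forall>b\<in>L. Gp (a + b) = Gp a + Gp b \<and> Gm (a + b) = Gm a + Gm b) \<and>
       (\<forall>c. \<forall>a\<in>L. Gp (scaleC c (fst a), scaleC c (snd a)) = scaleC c (Gp a)) \<and>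
       (\<forall>c. \<forall>a\<in>L. Gm (scaleC c (fst a), scaleC c (snd a)) = scaleC c (Gm a)) \<and>
       (\<exists>K. \<forall>a\<in>L. norm (Gp a, Gm a) \<le> K * norm a) \<and>
       (\<lambda>a. (Gp a, Gm a)) ` L = UNIV \<and>
       {a\<in>L. Gp a = 0 \<and> Gm a = 0} = A_T T \<and>
       (\<forall>a\<in>L. \<forall>b\<in>L. kform a b = \<i> * cinner (Gp a) (Gp b) - \<i> * cinner (Gm a) (Gm b)))"

definition weyl_function ::
  "('a::chilbert \<Rightarrow> 'a) \<Rightarrow> ('a \<times> 'a \<Rightarrow> 'p::chilbert) \<Rightarrow> ('a \<times> 'a \<Rightarrow> 'm::chilbert)
     \<Rightarrow> (complex \<Rightarrow> 'p \<Rightarrow> 'm) \<Rightarrow> bool" where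
  "weyl_function T Gp Gm B \<longleftrightarrow>
     (\<forall>l. cmod l < 1 \<longrightarrow> bij_betw Gp (N_plus T l) UNIV \<and>
                         (\<forall>a\<in>N_plus T l. Gm a = B l (Gp a))) \<and>
     (\<forall>l. cmod l < 1 \<longrightarrow> bij_betw Gm (N_minus T l) UNIV \<and>
                         (\<forall>a\<in>N_minus T l. Gp a = cadjoint (B (cnj l)) (Gm a)))"

definition gamma_plus :: "('a::chilbert \<Rightarrow> 'a) \<Rightarrow> ('a \<times> 'a \<Rightarrow> 'p::chilbert) \<Rightarrow> complex \<Rightarrow> 'p \<Rightarrow> 'a \<times> 'a" where
  "gamma_plus T Gp l z = (THE a. a \<in> N_plus T l \<and> Gp a = z)"

definition gamma_minus :: "('a::chilbert \<Rightarrow> 'a) \<Rightarrow> ('a \<times> 'a \<Rightarrow> 'm::chilbert) \<Rightarrow> complex \<Rightarrow> 'm \<Rightarrow> 'a \<times> 'a" where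
  "gamma_minus T Gm l z = (THE a. a \<in> N_minus T l \<and> Gm a = z)"

definition phi_plus :: "('a::chilbert \<Rightarrow> 'a) \<Rightarrow> ('a \<times> 'a \<Rightarrow> 'p::chilbert) \<Rightarrow> complex \<Rightarrow> 'p \<Rightarrow> 'a" where
  "phi_plus T Gp l z = fst (gamma_plus T Gp l z)"

definition phi_minus :: "('a::chilbert \<Rightarrow> 'a) \<Rightarrow> ('a \<times> 'a \<Rightarrow> 'm::chilbert) \<Rightarrow> complex \<Rightarrow> 'm \<Rightarrow> 'a" where
  "phi_minus T Gm l z = snd (gamma_minus T Gm l z)"

text \<open>Elements of F_l (conjugate-linear functionals on E_{conj l}) are represented by functions
  'a => complex; the pairing ((w, e)) is evaluation w e.\<close>
definition phi_minus_dag :: "('a::chilbert \<Rightarrow> 'a) \<Rightarrow> ('a \<times> 'a \<Rightarrow> 'm::chilbert) \<Rightarrow> complex \<Rightarrow> ('a \<Rightarrow> complex) \<Rightarrow> 'm" where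
  "phi_minus_dag T Gm l w = (THE v. \<forall>z. cinner v z = w (phi_minus T Gm (cnj l) z))"

definition phi_plus_dag :: "('a::chilbert \<Rightarrow> 'a) \<Rightarrow> ('a \<times> 'a \<Rightarrow> 'p::chilbert) \<Rightarrow> complex \<Rightarrow> ('a \<Rightarrow> complex) \<Rightarrow> 'p" where
  "phi_plus_dag T Gp l w = (THE v. \<forall>z. cinner v z = w (phi_plus T Gp (cnj l) z))"

text \<open>x-hat: l |-> (omega |-> (x, omega)_H)  (the same formula on both sheets).\<close>
definition xhat :: "'a::chilbert \<Rightarrow> complex \<Rightarrow> 'a \<Rightarrow> complex" where
  "xhat x = (\<lambda>l \<omega>. cinner x \<omega>)"

definition f_plus :: "('a::chilbert \<Rightarrow> 'a) \<Rightarrow> ('a \<times> 'a \<Rightarrow> 'm::chilbert) \<Rightarrow> (complex \<Rightarrow> 'a \<Rightarrow> complex) \<Rightarrow> complex \<Rightarrow> 'm" where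
  "f_plus T Gm s l = phi_minus_dag T Gm l (s l)"

definition f_minus :: "('a::chilbert \<Rightarrow> 'a) \<Rightarrow> ('a \<times> 'a \<Rightarrow> 'p::chilbert) \<Rightarrow> (complex \<Rightarrow> 'a \<Rightarrow> complex) \<Rightarrow> complex \<Rightarrow> 'p" where
  "f_minus T Gp s l = phi_plus_dag T Gp l (s l)"

end

theory Submission
  imports Defs
begin

text \<open>
  For x in H and \<lambda> in D_+, f_x(\<lambda>) is the vector representing the functional
  z |-> (x, phi_-(conj \<lambda>) z), and likewise on D_-. These vectors exist by the Riesz theorem:
  on N_\<lambda> the Green identity [a, a] = i |Gamma_+ a|^2 - i |Gamma_- a|^2 reduces to
  (1 - |\<lambda>|^2) |phi(\<lambda>) z|^2 <= |z|^2, so phi_+(\<lambda>) and phi_-(\<lambda>) are bounded.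
  The two formulas come from pairing a point (y, T y) of the graph, where Gamma_- vanishes,
  in the Green identity: with gamma_+(\<lambda>) z it gives
  (y - conj \<lambda> T y, phi_+(\<lambda>) z) = (Gamma_+(y, T y), z), whence f_y(0_-) = Gamma_+(y, T y)
  and the formula on D_-; with gamma_-(conj \<lambda>) z, together with the [.,.]-orthogonality of
  N_\<lambda> and N_(conj \<lambda>), it gives
  (T y, phi_-(conj \<lambda>) z) = \<lambda> (y, phi_-(conj \<lambda>) z) - (B(\<lambda>) Gamma_+(y, T y), z),
  the formula on D_+.
\<close>

section \<open>Complex inner product spaces\<close>

lemma cinner_zero_left [simp]: "cinner 0 (z::'a::complex_inner) = 0"
  using cinner_add_left[of 0 0 z] by simp

lemma cinner_zero_right [simp]: "cinner z (0::'a::complex_inner) = 0"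
  using cinner_commute[of z 0] by simp

lemma cinner_add_right: "cinner x (y + z) = cinner x y + cinner x (z::'a::complex_inner)"
  using cinner_commute[of x "y + z"] cinner_commute[of y x] cinner_commute[of z x]
  by (simp add: cinner_add_left)

lemma cinner_scaleC_right: "cinner x (scaleC c y) = cnj c * cinner x (y::'a::complex_inner)"
  using cinner_commute[of x "scaleC c y"] cinner_commute[of y x] by (simp add: cinner_scaleC_left)

lemma cinner_diff_left: "cinner (x - y) z = cinner x z - cinner y (z::'a::complex_inner)"
  using cinner_add_left[of "x - y" y z] by simp

lemma cinner_diff_right: "cinner z (x - y) = cinner z x - cinner z (y::'a::complex_inner)"
  using cinner_add_right[of z "x - y" y] by simp

lemma cinner_self_eq_norm: "cinner x x = complex_of_real (norm (x::'a::complex_inner) ^ 2)"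
  using norm_eq_sqrt_cinner[of x] cinner_self_nonneg[of x] cinner_self_real[of x]
  by (simp add: complex_eq_iff)

lemma cinner_scaleC_self:
  "cinner (scaleC l u) (scaleC l u) = complex_of_real (cmod l ^ 2 * norm (u::'a::complex_inner) ^ 2)"
proof -
  have "cinner (scaleC l u) (scaleC l u) = (l * cnj l) * cinner u u"
    by (simp add: cinner_scaleC_left cinner_scaleC_right)
  then show ?thesis
    by (simp add: cinner_self_eq_norm complex_norm_square [symmetric])
qed

lemma cinner_eqI:
  assumes "\<And>z. cinner v z = cinner w (z::'a::complex_inner)"
  shows "v = w"
proof -
  have "cinner (v - w) (v - w) = 0"
    using assms by (simp add: cinner_diff_left)
  then show ?thesis
    by (simp add: cinner_self_eq_zero)
qed

lemma cinner_self_diff_projection: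
  fixes e m :: "'a::complex_inner"
  assumes "m \<noteq> 0"
  shows "cinner (e - scaleC (cinner e m / cinner m m) m) (e - scaleC (cinner e m / cinner m m) m)
     = complex_of_real (norm e ^ 2 - cmod (cinner e m) ^ 2 / norm m ^ 2)"
proof -
  define c n where "c = cinner e m" and "n = cinner m m"
  have "n \<noteq> 0" "cnj n = n"
    using assms cinner_commute[of m m] by (simp_all add: n_def cinner_self_eq_zero)
  have "cinner m e = cnj c"
    unfolding c_def by (rule cinner_commute)
  then have "cinner (e - scaleC (c / n) m) (e - scaleC (c / n) m)
      = cinner e e - cnj (c / n) * c - (c / n) * cnj c + (c / n) * cnj (c / n) * n"
    by (simp add: cinner_diff_left cinner_diff_right cinner_scaleC_left cinner_scaleC_right
        c_def [symmetric] n_def [symmetric] algebra_simps)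
  also have "\<dots> = cinner e e - c * cnj c / n"
    using \<open>n \<noteq> 0\<close> \<open>cnj n = n\<close> by (simp add: field_simps)
  also have "\<dots> = complex_of_real (norm e ^ 2 - cmod c ^ 2 / norm m ^ 2)"
    by (simp add: n_def cinner_self_eq_norm complex_norm_square [symmetric])
  finally show ?thesis
    by (simp add: c_def n_def)
qed

lemma cinner_Cauchy_Schwarz: "cmod (cinner x y) \<le> norm x * norm (y::'a::complex_inner)"
proof (cases "y = 0")
  case False
  have "0 \<le> Re (cinner (x - scaleC (cinner x y / cinner y y) y)
                       (x - scaleC (cinner x y / cinner y y) y))"
    by (rule cinner_self_nonneg)
  then have "cmod (cinner x y) ^ 2 / norm y ^ 2 \<le> norm x ^ 2"
    by (simp add: cinner_self_diff_projection [OF False])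
  then have "cmod (cinner x y) ^ 2 \<le> (norm x * norm y) ^ 2"
    using False by (simp add: pos_divide_le_eq power_mult_distrib)
  then show ?thesis
    by (rule power2_le_imp_le) simp
qed simp

lemma cinner_parallelogram_law:
  fixes a b :: "'a::complex_inner"
  shows "norm (a + b) ^ 2 + norm (a - b) ^ 2 = 2 * norm a ^ 2 + 2 * norm b ^ 2"
proof -
  have "cinner (a + b) (a + b) + cinner (a - b) (a - b) = 2 * cinner a a + 2 * cinner b b"
    by (simp add: cinner_add_left cinner_add_right cinner_diff_left cinner_diff_right)
  then have "complex_of_real (norm (a + b) ^ 2 + norm (a - b) ^ 2)
      = complex_of_real (2 * norm a ^ 2 + 2 * norm b ^ 2)"
    by (simp only: cinner_self_eq_norm of_real_add of_real_mult of_real_numeral)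
  then show ?thesis
    by (simp only: of_real_eq_iff)
qed

section \<open>The Riesz representation theorem\<close>

lemma dist_sq_le_of_far_midpoint:
  fixes z p q :: "'a::complex_inner"
  assumes "d \<le> dist z (scaleR (1/2) (p + q))" and "0 \<le> d"
  shows "dist p q ^ 2 \<le> 2 * (dist z p ^ 2 - d ^ 2) + 2 * (dist z q ^ 2 - d ^ 2)"
proof -
  have "z - p + (z - q) = scaleR 2 (z - scaleR (1/2) (p + q))"
    by (simp add: algebra_simps scaleR_2)
  then have "norm (z - p + (z - q)) = 2 * dist z (scaleR (1/2) (p + q))"
    by (simp add: dist_norm)
  then have "(2 * d) ^ 2 \<le> norm (z - p + (z - q)) ^ 2"
    using assms by (intro power_mono) auto
  moreover have "norm (z - p - (z - q)) = dist p q"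
    by (simp add: dist_norm norm_minus_commute)
  ultimately show ?thesis
    using cinner_parallelogram_law[of "z - p" "z - q"] by (simp add: dist_norm)
qed

lemma minimizing_sequence_Cauchy:
  fixes M :: "'a::complex_inner set"
  assumes "convex M" and ms: "\<And>n. ms n \<in> M" and d_le: "\<And>m. m \<in> M \<Longrightarrow> d \<le> dist z m"
    and lim: "(\<lambda>n. dist z (ms n)) \<longlonglongrightarrow> d"
  shows "Cauchy ms"
proof (rule metric_CauchyI)
  fix e :: real
  assume "0 < e"
  have "0 \<le> d"
    using lim by (rule LIMSEQ_le_const) simp
  have "(\<lambda>n. dist z (ms n) ^ 2 - d ^ 2) \<longlonglongrightarrow> 0"
    using tendsto_diff [OF tendsto_power [OF lim] tendsto_const, of 2 "d ^ 2"] by simp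
  then obtain N where N: "\<And>n. N \<le> n \<Longrightarrow> \<bar>dist z (ms n) ^ 2 - d ^ 2\<bar> < e ^ 2 / 4"
    using LIMSEQ_D [of _ 0 "e ^ 2 / 4"] \<open>0 < e\<close> by fastforce
  have "dist (ms m) (ms n) < e" if "N \<le> m" "N \<le> n" for m n
  proof -
    have "scaleR (1/2) (ms m + ms n) \<in> M"
      using convexD [OF assms(1) ms ms, of "1/2" "1/2"] by (simp add: scaleR_right_distrib)
    then have "dist (ms m) (ms n) ^ 2
        \<le> 2 * (dist z (ms m) ^ 2 - d ^ 2) + 2 * (dist z (ms n) ^ 2 - d ^ 2)"
      by (intro dist_sq_le_of_far_midpoint d_le \<open>0 \<le> d\<close>)
    then have "dist (ms m) (ms n) ^ 2 < e ^ 2"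
      using N [OF that(1)] N [OF that(2)] unfolding abs_less_iff by (simp add: field_simps)
    then show ?thesis
      using \<open>0 < e\<close> by (simp add: power_less_imp_less_base)
  qed
  then show "\<exists>N. \<forall>m\<ge>N. \<forall>n\<ge>N. dist (ms m) (ms n) < e"
    by blast
qed

lemma closest_point_exists:
  fixes M :: "'a::chilbert set"
  assumes "closed M" "convex M" "M \<noteq> {}"
  obtains m0 where "m0 \<in> M" "\<And>m. m \<in> M \<Longrightarrow> dist z m0 \<le> dist z m"
proof -
  define d where "d = infdist z M"
  have d_le: "d \<le> dist z m" if "m \<in> M" for m
    using that by (simp add: d_def infdist_le)
  have "\<exists>m\<in>M. dist z m < d + inverse (real (Suc n))" for n
    using assms(3) cINF_less_iff [of M "dist z" "d + inverse (real (Suc n))"]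
    by (simp add: d_def infdist_notempty)
  then obtain ms where ms: "\<And>n. ms n \<in> M" "\<And>n. dist z (ms n) < d + inverse (real (Suc n))"
    by metis
  have upper: "(\<lambda>n. d + inverse (real (Suc n))) \<longlonglongrightarrow> d"
    using tendsto_add [OF tendsto_const LIMSEQ_inverse_real_of_nat] by simp
  have lim: "(\<lambda>n. dist z (ms n)) \<longlonglongrightarrow> d"
  proof (rule tendsto_sandwich [OF _ _ tendsto_const upper])
    show "\<forall>\<^sub>F n in sequentially. d \<le> dist z (ms n)"
      using ms(1) d_le by simp
    show "\<forall>\<^sub>F n in sequentially. dist z (ms n) \<le> d + inverse (real (Suc n))"
      using ms(2) by (simp add: less_imp_le)
  qed
  obtain m0 where m0: "ms \<longlonglongrightarrow> m0"
    using minimizing_sequence_Cauchy [OF assms(2) ms(1) d_le lim] Cauchy_convergent_iff convergent_def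
    by blast
  have "dist z m0 = d"
    using LIMSEQ_unique [OF tendsto_dist [OF tendsto_const m0] lim] .
  then show thesis
    using closed_sequentially [OF assms(1) ms(1) m0] d_le that by auto
qed

lemma closest_point_orthogonal:
  fixes M :: "'a::complex_inner set"
  assumes "csubspace M" "m0 \<in> M" "\<And>m. m \<in> M \<Longrightarrow> dist z m0 \<le> dist z m" "m \<in> M"
  shows "cinner (z - m0) m = 0"
proof (cases "m = 0")
  case False
  define e where "e = z - m0"
  have "m0 + scaleC (cinner e m / cinner m m) m \<in> M"
    using assms(1,2,4) by (simp add: csubspace_def)
  then have "norm e \<le> norm (e - scaleC (cinner e m / cinner m m) m)"
    using assms(3) by (fastforce simp: e_def dist_norm algebra_simps)
  then have "norm e ^ 2 \<le> Re (cinner (e - scaleC (cinner e m / cinner m m) m)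
                                 (e - scaleC (cinner e m / cinner m m) m))"
    by (simp add: cinner_self_eq_norm power_mono)
  then have "cmod (cinner e m) ^ 2 / norm m ^ 2 \<le> 0"
    by (simp add: cinner_self_diff_projection [OF False])
  then show ?thesis
    using False by (simp add: e_def divide_le_0_iff)
qed simp

lemma csubspace_convex: "csubspace M \<Longrightarrow> convex M"
  by (simp add: convex_def csubspace_def scaleR_scaleC)

lemma clinear_functional:
  fixes g :: "'a::complex_vector \<Rightarrow> complex"
  assumes "clinear g"
  shows "g (x + y) = g x + g y" "g (scaleC c x) = c * g x" "g (x - y) = g x - g y" "g 0 = 0"
proof -
  show add: "g (x + y) = g x + g y" for x y
    using assms by (simp add: clinear_def)
  show "g (scaleC c x) = c * g x"
    using assms by (simp add: clinear_def scaleC_complex_def)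
  show "g (x - y) = g x - g y"
    using add [of "x - y" y] by simp
  show "g 0 = 0"
    using add [of 0 0] by simp
qed

lemma kernel_closed_csubspace:
  fixes g :: "'a::complex_inner \<Rightarrow> complex"
  assumes "cbounded_linear g"
  shows "csubspace {z. g z = 0}" and "closed {z. g z = 0}"
proof -
  have g: "clinear g"
    using assms by (simp add: cbounded_linear_def)
  then show "csubspace {z. g z = 0}"
    by (simp add: csubspace_def clinear_functional)
  obtain K where K: "\<And>x. norm (g x) \<le> K * norm x"
    using assms by (auto simp: cbounded_linear_def)
  have "dist (g x) (g y) \<le> max 0 K * dist x y" for x y
    using K [of "x - y"] mult_right_mono [of K "max 0 K" "norm (x - y)"]
    by (simp add: clinear_functional [OF g] dist_norm)
  then have "(max 0 K)-lipschitz_on UNIV g"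
    by (simp add: lipschitz_onI)
  then show "closed {z. g z = 0}"
    by (intro closed_Collect_eq lipschitz_on_continuous_on continuous_on_const)
qed

lemma functional_eq_cinner_of_orthogonal_kernel:
  fixes g :: "'a::complex_inner \<Rightarrow> complex"
  assumes "clinear g" "g e \<noteq> 0" and orth: "\<And>m. g m = 0 \<Longrightarrow> cinner e m = 0"
  shows "g z = cinner z (scaleC (cnj (g e) / cinner e e) e)"
proof -
  have "e \<noteq> 0"
    using assms(2) clinear_functional(4) [OF assms(1)] by auto
  then have ee: "cinner e e \<noteq> 0" "cnj (cinner e e) = cinner e e"
    using cinner_commute [of e e] by (auto simp: cinner_self_eq_zero)
  have "g (z - scaleC (g z / g e) e) = 0"
    using assms(2) by (simp add: clinear_functional [OF assms(1)])
  then have "cinner e (z - scaleC (g z / g e) e) = 0"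
    by (rule orth)
  then have "cinner (z - scaleC (g z / g e) e) e = 0"
    using cinner_commute [of _ e] by (metis complex_cnj_zero)
  then have "cinner z e = g z / g e * cinner e e"
    by (simp add: cinner_diff_left cinner_scaleC_left)
  then show ?thesis
    using ee assms(2) by (simp add: cinner_scaleC_right)
qed

lemma riesz_representation:
  fixes g :: "'a::chilbert \<Rightarrow> complex"
  assumes "cbounded_linear g"
  shows "\<exists>v. \<forall>z. g z = cinner z v"
proof (cases "\<forall>z. g z = 0")
  case False
  then obtain z0 where "g z0 \<noteq> 0"
    by auto
  have g: "clinear g"
    using assms by (simp add: cbounded_linear_def)
  define M where "M = {z. g z = 0}"
  note M = kernel_closed_csubspace [OF assms, folded M_def]
  have "M \<noteq> {}"
    using M(1) by (auto simp: csubspace_def)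
  then obtain m0 where m0: "m0 \<in> M" "\<And>m. m \<in> M \<Longrightarrow> dist z0 m0 \<le> dist z0 m"
    using closest_point_exists M(2) csubspace_convex [OF M(1)] by blast
  have "g (z0 - m0) \<noteq> 0"
    using m0(1) \<open>g z0 \<noteq> 0\<close> by (simp add: M_def clinear_functional [OF g])
  moreover have "cinner (z0 - m0) m = 0" if "g m = 0" for m
    using closest_point_orthogonal [OF M(1) m0] that by (simp add: M_def)
  ultimately show ?thesis
    using functional_eq_cinner_of_orthogonal_kernel [OF g] by blast
qed (auto intro: exI [of _ 0])

lemma adjoint_vector_exists:
  fixes \<phi> :: "'a::chilbert \<Rightarrow> 'b::chilbert"
  assumes "cbounded_linear \<phi>"
  shows "\<exists>v. \<forall>z. cinner v z = cinner x (\<phi> z)"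
proof -
  obtain K where K: "\<And>z. norm (\<phi> z) \<le> K * norm z"
    using assms by (auto simp: cbounded_linear_def)
  have "cbounded_linear (\<lambda>z. cinner (\<phi> z) x)"
    unfolding cbounded_linear_def clinear_def
  proof (intro conjI allI exI)
    show "cinner (\<phi> (a + b)) x = cinner (\<phi> a) x + cinner (\<phi> b) x" for a b
      using assms by (simp add: cbounded_linear_def clinear_def cinner_add_left)
    show "cinner (\<phi> (scaleC c a)) x = scaleC c (cinner (\<phi> a) x)" for c a
      using assms by (simp add: cbounded_linear_def clinear_def cinner_scaleC_left scaleC_complex_def)
    show "norm (cinner (\<phi> z) x) \<le> K * norm x * norm z" for z
    proof -
      have "norm (cinner (\<phi> z) x) \<le> norm (\<phi> z) * norm x"
        by (simp add: cinner_Cauchy_Schwarz)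
      also have "\<dots> \<le> K * norm z * norm x"
        using K [of z] by (simp add: mult_right_mono)
      finally show ?thesis
        by (simp add: ac_simps)
    qed
  qed
  then obtain v where "\<And>z. cinner (\<phi> z) x = cinner z v"
    using riesz_representation by blast
  then have "cinner v z = cinner x (\<phi> z)" for z
    by (metis cinner_commute)
  then show ?thesis
    by blast
qed

section \<open>Boundary quadruples and the Weyl function\<close>

lemma clinear_the_inv_into_pair:
  fixes G :: "'a::complex_vector \<times> 'a \<Rightarrow> 'b::complex_vector"
  assumes bij: "bij_betw G N UNIV"
    and add: "\<And>a b. a \<in> N \<Longrightarrow> b \<in> N \<Longrightarrow> a + b \<in> N \<and> G (a + b) = G a + G b"
    and scale: "\<And>c a. a \<in> N \<Longrightarrow>
      (scaleC c (fst a), scaleC c (snd a)) \<in> N \<and>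
      G (scaleC c (fst a), scaleC c (snd a)) = scaleC c (G a)"
  shows "clinear (\<lambda>z. fst (the_inv_into N G z))" and "clinear (\<lambda>z. snd (the_inv_into N G z))"
proof -
  have inj: "inj_on G N" and inv: "\<And>y. the_inv_into N G y \<in> N \<and> G (the_inv_into N G y) = y"
    using bij by (auto simp: bij_betw_def the_inv_into_into f_the_inv_into_f)
  have "the_inv_into N G (y + z) = the_inv_into N G y + the_inv_into N G z" for y z
    using add [of "the_inv_into N G y" "the_inv_into N G z"] inv by (intro the_inv_into_f_eq [OF inj]) auto
  moreover have "the_inv_into N G (scaleC c y)
      = (scaleC c (fst (the_inv_into N G y)), scaleC c (snd (the_inv_into N G y)))" for c y
    using scale [of "the_inv_into N G y" c] inv by (intro the_inv_into_f_eq [OF inj]) auto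
  ultimately show "clinear (\<lambda>z. fst (the_inv_into N G z))" "clinear (\<lambda>z. snd (the_inv_into N G z))"
    by (simp_all add: clinear_def)
qed

lemma norm_le_of_contraction_defect:
  fixes l :: complex
  assumes "cmod l < 1" and "(1 - cmod l ^ 2) * norm u ^ 2 \<le> norm z ^ 2"
  shows "norm u \<le> inverse (sqrt (1 - cmod l ^ 2)) * norm z"
proof -
  have "cmod l ^ 2 < 1"
    using assms(1) by (simp add: power_less_one_iff)
  then have "(sqrt (1 - cmod l ^ 2) * norm u) ^ 2 \<le> norm z ^ 2"
    using assms(2) by (simp add: power_mult_distrib)
  then have "sqrt (1 - cmod l ^ 2) * norm u \<le> norm z"
    by (rule power2_le_imp_le) simp
  then show ?thesis
    using \<open>cmod l ^ 2 < 1\<close> by (simp add: field_simps)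
qed

lemma s_orth_add: "a \<in> s_orth S \<Longrightarrow> b \<in> s_orth S \<Longrightarrow> a + b \<in> s_orth S"
  by (simp add: s_orth_def kform_def cinner_add_left algebra_simps)

lemma s_orth_scale: "a \<in> s_orth S \<Longrightarrow> (scaleC c (fst a), scaleC c (snd a)) \<in> s_orth S"
  by (simp add: s_orth_def kform_def cinner_scaleC_left flip: right_diff_distrib mult.assoc)

lemma kform_N_plus_self:
  "kform (u, scaleC l u) (u, scaleC l u) = \<i> * complex_of_real ((1 - cmod l ^ 2) * norm u ^ 2)"
  unfolding kform_def fst_conv snd_conv cinner_scaleC_self by (simp add: cinner_self_eq_norm algebra_simps)

lemma kform_N_minus_self:
  "kform (scaleC l u, u) (scaleC l u, u) = - \<i> * complex_of_real ((1 - cmod l ^ 2) * norm u ^ 2)"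
  unfolding kform_def fst_conv snd_conv cinner_scaleC_self by (simp add: cinner_self_eq_norm algebra_simps)

lemma kform_N_plus_N_minus_cnj: "kform (u, scaleC l u) (scaleC (cnj l) w, w) = 0"
  by (simp add: kform_def cinner_scaleC_left cinner_scaleC_right)

lemma N_plus_iff: "a \<in> N_plus T l \<longleftrightarrow> a \<in> s_orth (A_T T) \<and> snd a = scaleC l (fst a)"
  by (cases a) (auto simp: N_plus_def)

lemma N_minus_iff: "a \<in> N_minus T l \<longleftrightarrow> a \<in> s_orth (A_T T) \<and> fst a = scaleC l (snd a)"
  by (cases a) (auto simp: N_minus_def)

lemma gamma_plus_eq_the_inv_into: "gamma_plus T Gp l = the_inv_into (N_plus T l) Gp"
  by (simp add: fun_eq_iff gamma_plus_def the_inv_into_def)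

lemma gamma_minus_eq_the_inv_into: "gamma_minus T Gm l = the_inv_into (N_minus T l) Gm"
  by (simp add: fun_eq_iff gamma_minus_def the_inv_into_def)

text \<open>
  The dual maps phi_minus_dag and phi_plus_dag are definite descriptions, so f_plus and f_minus
  are pinned down only once a representing vector is exhibited; for xhat x the Riesz theorem
  provides it (cinner_f_plus_xhat, cinner_f_minus_xhat).
\<close>

lemma f_plus_eqI:
  assumes "\<And>z. cinner v z = s l (phi_minus T Gm (cnj l) z)"
  shows "f_plus T Gm s l = v"
  unfolding f_plus_def phi_minus_dag_def
proof (rule the_equality)
  show "\<And>w. \<forall>z. cinner w z = s l (phi_minus T Gm (cnj l) z) \<Longrightarrow> w = v"
    using assms by (auto intro: cinner_eqI)
qed (use assms in blast)

lemma f_minus_eqI: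
  assumes "\<And>z. cinner v z = s l (phi_plus T Gp (cnj l) z)"
  shows "f_minus T Gp s l = v"
  unfolding f_minus_def phi_plus_dag_def
proof (rule the_equality)
  show "\<And>w. \<forall>z. cinner w z = s l (phi_plus T Gp (cnj l) z) \<Longrightarrow> w = v"
    using assms by (auto intro: cinner_eqI)
qed (use assms in blast)

lemma xhat_apply [simp]: "xhat x l \<omega> = cinner x \<omega>"
  by (simp add: xhat_def)

locale boundary_quadruple_weyl =
  fixes T :: "'h::chilbert \<Rightarrow> 'h"
    and Gp :: "'h \<times> 'h \<Rightarrow> 'p::chilbert"
    and Gm :: "'h \<times> 'h \<Rightarrow> 'm::chilbert"
    and B :: "complex \<Rightarrow> 'p \<Rightarrow> 'm"
  assumes bq: "boundary_quadruple T Gp Gm"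
    and weyl: "weyl_function T Gp Gm B"
begin

lemma kform_green_identity:
  "a \<in> s_orth (A_T T) \<Longrightarrow> b \<in> s_orth (A_T T) \<Longrightarrow>
    kform a b = \<i> * cinner (Gp a) (Gp b) - \<i> * cinner (Gm a) (Gm b)"
  using bq by (simp add: boundary_quadruple_def Let_def)

lemma boundary_add:
  "a \<in> s_orth (A_T T) \<Longrightarrow> b \<in> s_orth (A_T T) \<Longrightarrow>
    Gp (a + b) = Gp a + Gp b \<and> Gm (a + b) = Gm a + Gm b"
  using bq by (simp add: boundary_quadruple_def Let_def)

lemma boundary_scale:
  "a \<in> s_orth (A_T T) \<Longrightarrow>
    Gp (scaleC c (fst a), scaleC c (snd a)) = scaleC c (Gp a) \<and>
    Gm (scaleC c (fst a), scaleC c (snd a)) = scaleC c (Gm a)"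
  using bq by (simp add: boundary_quadruple_def Let_def)

lemma gamma_plus:
  assumes "cmod l < 1"
  shows "gamma_plus T Gp l z \<in> N_plus T l" and "Gp (gamma_plus T Gp l z) = z"
    and "gamma_plus T Gp l z = (phi_plus T Gp l z, scaleC l (phi_plus T Gp l z))"
proof -
  have "bij_betw Gp (N_plus T l) UNIV"
    using weyl assms by (simp add: weyl_function_def)
  then show "gamma_plus T Gp l z \<in> N_plus T l" "Gp (gamma_plus T Gp l z) = z"
    by (auto simp: gamma_plus_eq_the_inv_into bij_betw_def the_inv_into_into f_the_inv_into_f)
  then show "gamma_plus T Gp l z = (phi_plus T Gp l z, scaleC l (phi_plus T Gp l z))"
    by (simp add: N_plus_iff phi_plus_def prod_eq_iff)
qed

lemma gamma_minus:
  assumes "cmod l < 1"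
  shows "gamma_minus T Gm l z \<in> N_minus T l" and "Gm (gamma_minus T Gm l z) = z"
    and "gamma_minus T Gm l z = (scaleC l (phi_minus T Gm l z), phi_minus T Gm l z)"
proof -
  have "bij_betw Gm (N_minus T l) UNIV"
    using weyl assms by (simp add: weyl_function_def)
  then show "gamma_minus T Gm l z \<in> N_minus T l" "Gm (gamma_minus T Gm l z) = z"
    by (auto simp: gamma_minus_eq_the_inv_into bij_betw_def the_inv_into_into f_the_inv_into_f)
  then show "gamma_minus T Gm l z = (scaleC l (phi_minus T Gm l z), phi_minus T Gm l z)"
    by (simp add: N_minus_iff phi_minus_def prod_eq_iff)
qed

lemma gamma_plus_s_orth: "cmod l < 1 \<Longrightarrow> gamma_plus T Gp l z \<in> s_orth (A_T T)"
  using gamma_plus(1) by (simp add: N_plus_iff)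

lemma gamma_minus_s_orth: "cmod l < 1 \<Longrightarrow> gamma_minus T Gm l z \<in> s_orth (A_T T)"
  using gamma_minus(1) by (simp add: N_minus_iff)

lemma cbounded_linear_phi_plus:
  assumes l: "cmod l < 1"
  shows "cbounded_linear (phi_plus T Gp l)"
proof -
  have bij: "bij_betw Gp (N_plus T l) UNIV"
    using weyl l by (simp add: weyl_function_def)
  have N_add: "a + b \<in> N_plus T l \<and> Gp (a + b) = Gp a + Gp b"
    if "a \<in> N_plus T l" "b \<in> N_plus T l" for a b
    using that s_orth_add [of a _ b] boundary_add [of a b] by (simp add: N_plus_iff scaleC_add_right)
  have N_scale: "(scaleC c (fst a), scaleC c (snd a)) \<in> N_plus T l \<and>
      Gp (scaleC c (fst a), scaleC c (snd a)) = scaleC c (Gp a)" if "a \<in> N_plus T l" for a c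
    using that s_orth_scale [of a _ c] boundary_scale [of a c]
    by (simp add: N_plus_iff scaleC_scaleC mult.commute)
  have "clinear (\<lambda>z. fst (the_inv_into (N_plus T l) Gp z))"
    by (rule clinear_the_inv_into_pair(1) [OF bij N_add N_scale])
  then have "clinear (phi_plus T Gp l)"
    unfolding phi_plus_def [abs_def] gamma_plus_eq_the_inv_into .
  moreover have "norm (phi_plus T Gp l z) \<le> inverse (sqrt (1 - cmod l ^ 2)) * norm z" for z
  proof -
    define u where "u = phi_plus T Gp l z"
    note a = gamma_plus(3) [OF l, of z, folded u_def] gamma_plus_s_orth [OF l, of z]
    have "\<i> * complex_of_real ((1 - cmod l ^ 2) * norm u ^ 2)
        = \<i> * complex_of_real (norm z ^ 2 - norm (Gm (gamma_plus T Gp l z)) ^ 2)"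
      using kform_green_identity [OF a(2) a(2)] gamma_plus(2) [OF l, of z]
      by (simp add: a(1) kform_N_plus_self cinner_self_eq_norm right_diff_distrib)
    then have "(1 - cmod l ^ 2) * norm u ^ 2 = norm z ^ 2 - norm (Gm (gamma_plus T Gp l z)) ^ 2"
      by (simp only: mult_cancel_left of_real_eq_iff complex_i_not_zero simp_thms)
    then have "(1 - cmod l ^ 2) * norm u ^ 2 \<le> norm z ^ 2"
      using zero_le_power2 [of "norm (Gm (gamma_plus T Gp l z))"] by linarith
    then show ?thesis
      unfolding u_def by (rule norm_le_of_contraction_defect [OF l])
  qed
  ultimately show ?thesis
    unfolding cbounded_linear_def by blast
qed

lemma cbounded_linear_phi_minus:
  assumes l: "cmod l < 1"
  shows "cbounded_linear (phi_minus T Gm l)"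
proof -
  have bij: "bij_betw Gm (N_minus T l) UNIV"
    using weyl l by (simp add: weyl_function_def)
  have N_add: "a + b \<in> N_minus T l \<and> Gm (a + b) = Gm a + Gm b"
    if "a \<in> N_minus T l" "b \<in> N_minus T l" for a b
    using that s_orth_add [of a _ b] boundary_add [of a b] by (simp add: N_minus_iff scaleC_add_right)
  have N_scale: "(scaleC c (fst a), scaleC c (snd a)) \<in> N_minus T l \<and>
      Gm (scaleC c (fst a), scaleC c (snd a)) = scaleC c (Gm a)" if "a \<in> N_minus T l" for a c
    using that s_orth_scale [of a _ c] boundary_scale [of a c]
    by (simp add: N_minus_iff scaleC_scaleC mult.commute)
  have "clinear (\<lambda>z. snd (the_inv_into (N_minus T l) Gm z))"
    by (rule clinear_the_inv_into_pair(2) [OF bij N_add N_scale])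
  then have "clinear (phi_minus T Gm l)"
    unfolding phi_minus_def [abs_def] gamma_minus_eq_the_inv_into .
  moreover have "norm (phi_minus T Gm l z) \<le> inverse (sqrt (1 - cmod l ^ 2)) * norm z" for z
  proof -
    define u where "u = phi_minus T Gm l z"
    note a = gamma_minus(3) [OF l, of z, folded u_def] gamma_minus_s_orth [OF l, of z]
    have "\<i> * complex_of_real (- ((1 - cmod l ^ 2) * norm u ^ 2))
        = \<i> * complex_of_real (norm (Gp (gamma_minus T Gm l z)) ^ 2 - norm z ^ 2)"
      using kform_green_identity [OF a(2) a(2)] gamma_minus(2) [OF l, of z]
      by (simp add: a(1) kform_N_minus_self cinner_self_eq_norm right_diff_distrib)
    then have "- ((1 - cmod l ^ 2) * norm u ^ 2) = norm (Gp (gamma_minus T Gm l z)) ^ 2 - norm z ^ 2"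
      by (simp only: mult_cancel_left of_real_eq_iff complex_i_not_zero simp_thms)
    then have "(1 - cmod l ^ 2) * norm u ^ 2 \<le> norm z ^ 2"
      using zero_le_power2 [of "norm (Gp (gamma_minus T Gm l z))"] by linarith
    then show ?thesis
      unfolding u_def by (rule norm_le_of_contraction_defect [OF l])
  qed
  ultimately show ?thesis
    unfolding cbounded_linear_def by blast
qed

text \<open>
  A weak form of Gamma_+ = B(l)^* Gamma_- on N_(cnj l), derived from the [.,.]-orthogonality of
  N_l and N_(cnj l); it avoids cadjoint, whose definite description needs the adjoint to exist.
\<close>

lemma cinner_Gp_gamma_minus:
  assumes "cmod l < 1"
  shows "cinner p (Gp (gamma_minus T Gm (cnj l) w)) = cinner (B l p) w"
proof -
  have l': "cmod (cnj l) < 1"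
    using assms by simp
  define a b where "a = gamma_plus T Gp l p" and "b = gamma_minus T Gm (cnj l) w"
  have "Gm a = B l p"
    using weyl assms gamma_plus(1,2) [OF assms, of p] by (auto simp: weyl_function_def a_def)
  moreover have "kform a b = 0"
    unfolding a_def b_def gamma_plus(3) [OF assms] gamma_minus(3) [OF l'] complex_cnj_cnj
    by (rule kform_N_plus_N_minus_cnj)
  ultimately show ?thesis
    using kform_green_identity [OF gamma_plus_s_orth [OF assms] gamma_minus_s_orth [OF l'], of p w]
      gamma_plus(2) [OF assms, of p] gamma_minus(2) [OF l', of w]
    by (simp add: a_def b_def)
qed

lemma cinner_f_plus_xhat:
  assumes "cmod l < 1"
  shows "cinner (f_plus T Gm (xhat x) l) z = cinner x (phi_minus T Gm (cnj l) z)"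
proof -
  obtain v where v: "\<And>z. cinner v z = cinner x (phi_minus T Gm (cnj l) z)"
    using adjoint_vector_exists [OF cbounded_linear_phi_minus] assms by fastforce
  then have "f_plus T Gm (xhat x) l = v"
    by (intro f_plus_eqI) simp
  then show ?thesis
    by (simp add: v)
qed

lemma cinner_f_minus_xhat:
  assumes "cmod l < 1"
  shows "cinner (f_minus T Gp (xhat x) l) z = cinner x (phi_plus T Gp (cnj l) z)"
proof -
  obtain v where v: "\<And>z. cinner v z = cinner x (phi_plus T Gp (cnj l) z)"
    using adjoint_vector_exists [OF cbounded_linear_phi_plus] assms by fastforce
  then have "f_minus T Gp (xhat x) l = v"
    by (intro f_minus_eqI) simp
  then show ?thesis
    by (simp add: v)
qed

end

locale boundary_quadruple_graph = boundary_quadruple_weyl +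
  assumes graph: "{(x, T x) | x. True} = {a \<in> s_orth (A_T T). Gm a = 0}"
begin

lemma graph_s_orth: "(y, T y) \<in> s_orth (A_T T)" and Gm_graph: "Gm (y, T y) = 0"
  using graph by blast+

lemma cinner_phi_plus_graph:
  assumes "cmod l < 1"
  shows "cinner y (phi_plus T Gp l z) - cnj l * cinner (T y) (phi_plus T Gp l z) = cinner (Gp (y, T y)) z"
proof -
  have "kform (y, T y) (gamma_plus T Gp l z) = \<i> * cinner (Gp (y, T y)) z"
    using kform_green_identity [OF graph_s_orth gamma_plus_s_orth [OF assms]]
    by (simp add: Gm_graph gamma_plus(2) [OF assms])
  then show ?thesis
    by (simp add: gamma_plus(3) [OF assms] kform_def cinner_scaleC_right right_diff_distrib [symmetric])
qed

lemma cinner_phi_minus_graph: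
  assumes "cmod l < 1"
  shows "cinner (T y) (phi_minus T Gm (cnj l) z)
    = l * cinner y (phi_minus T Gm (cnj l) z) - cinner (B l (Gp (y, T y))) z"
proof -
  have l': "cmod (cnj l) < 1"
    using assms by simp
  have "kform (y, T y) (gamma_minus T Gm (cnj l) z) = \<i> * cinner (B l (Gp (y, T y))) z"
    using kform_green_identity [OF graph_s_orth gamma_minus_s_orth [OF l']]
    by (simp add: Gm_graph cinner_Gp_gamma_minus [OF assms])
  then have "l * cinner y (phi_minus T Gm (cnj l) z) - cinner (T y) (phi_minus T Gm (cnj l) z)
      = cinner (B l (Gp (y, T y))) z"
    by (simp add: gamma_minus(3) [OF l'] kform_def cinner_scaleC_right right_diff_distrib [symmetric])
  then show ?thesis
    by (simp add: eq_diff_eq diff_eq_eq)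
qed

lemma f_minus_xhat_zero: "f_minus T Gp (xhat x) 0 = Gp (x, T x)"
  by (rule f_minus_eqI) (use cinner_phi_plus_graph [of 0 x] in simp)

lemma f_plus_xhat_T:
  assumes "cmod l < 1"
  shows "f_plus T Gm (xhat (T x)) l = scaleC l (f_plus T Gm (xhat x) l) - B l (Gp (x, T x))"
  by (rule f_plus_eqI)
    (simp add: cinner_diff_left cinner_scaleC_left cinner_f_plus_xhat cinner_phi_minus_graph assms)

lemma f_minus_xhat_T:
  assumes "cmod l < 1" and "l \<noteq> 0"
  shows "f_minus T Gp (xhat (T x)) l = scaleC (1 / l) (f_minus T Gp (xhat x) l - Gp (x, T x))"
proof (rule f_minus_eqI)
  fix z
  have "cmod (cnj l) < 1"
    using assms(1) by simp
  from cinner_phi_plus_graph [OF this, of x z]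
  have "cinner x (phi_plus T Gp (cnj l) z) - cinner (Gp (x, T x)) z
      = l * cinner (T x) (phi_plus T Gp (cnj l) z)"
    by (simp add: eq_diff_eq diff_eq_eq)
  then show "cinner (scaleC (1 / l) (f_minus T Gp (xhat x) l - Gp (x, T x))) z
      = xhat (T x) l (phi_plus T Gp (cnj l) z)"
    using assms by (simp add: cinner_scaleC_left cinner_diff_left cinner_f_minus_xhat field_simps)
qed

end

theorem corollary4p18:
  fixes T :: "'h::chilbert \<Rightarrow> 'h"
    and Gp :: "'h \<times> 'h \<Rightarrow> 'p::chilbert"
    and Gm :: "'h \<times> 'h \<Rightarrow> 'm::chilbert"
    and B :: "complex \<Rightarrow> 'p \<Rightarrow> 'm"
  assumes H_inf: "infinite_dimensional TYPE('h)"
    and H_sep: "separable_type TYPE('h)"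
    and T_bl: "cbounded_linear T"
    and T_contr: "\<forall>x. norm (T x) \<le> norm x"
    and T_cnu: "completely_non_unitary T"
    and bq: "boundary_quadruple T Gp Gm"
    and weyl: "weyl_function T Gp Gm B"
    and graph: "{(x, T x) | x. True} = {a \<in> s_orth (A_T T). Gm a = 0}"
  shows "(\<forall>x l. cmod l < 1 \<longrightarrow>
            f_plus T Gm (xhat (T x)) l
              = scaleC l (f_plus T Gm (xhat x) l) - B l (f_minus T Gp (xhat x) 0))
       \<and> (\<forall>x l. cmod l < 1 \<and> l \<noteq> 0 \<longrightarrow>
            f_minus T Gp (xhat (T x)) l
              = scaleC (1 / l) (f_minus T Gp (xhat x) l - f_minus T Gp (xhat x) 0))"
proof -
  interpret boundary_quadruple_graph T Gp Gm B
    by unfold_locales (fact bq weyl graph)+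
  show ?thesis
    by (simp add: f_minus_xhat_zero f_plus_xhat_T f_minus_xhat_T)
qed

end
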